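(* Let $(\mathcal{N}, +, <)$ be a set $\mathcal{N} \supseteq \mathbb{N}$ with a binary operation $+$ extending addition on $\mathbb{N}$ and a strict total order $<$ extending the usual order on $\mathbb{N}$ (write $x \leq y$ for $x<y$ or $x=y$). Let $\mathrm{num}: \mathcal{P}(\mathbb{N}) \to \mathcal{N}$ satisfy: (Unit) $\mathrm{num}(\{n\}) = 1$ for all $n \in \mathbb{N}$; (Additivity) if $S \cap T = \emptyset$ then $\mathrm{num}(S \cup T) = \mathrm{num}(S) + \mathrm{num}(T)$; (Finite approximation) if $f_n(S) \leq f_n(T)$ for all $n \in \mathbb{N}$ then $\mathrm{num}(S) \leq \mathrm{num}(T)$; (Euclidean principle) if $S \subsetneq T$ then $\mathrm{num}(S) < \mathrm{num}(T)$. Then: (a) $\mathrm{num}(F) = |F|$ for every finite nonempty $F \subseteq \mathbb{N}$; (b) for nonempty $S \subseteq \mathbb{N}$, $\mathrm{num}(S) \in \mathbb{N}$ if and only if $S$ is finite; (c) $\mathrm{num}(\mathbb{N}) \notin \mathbb{N}$ and $\mathrm{num}(S) < \mathrm{num}(\mathbb{N})$ for every $S \subsetneq \mathbb{N}$; (d) for all $S, T \subseteq \mathbb{N}$, if $\mathrm{num}(S) = \mathrm{num}(T)$ then $|S| = |T|$; (e) there exist $S, T \subseteq \mathbb{N}$ with $|S| = |T|$ but $\mathrm{num}(S) \neq \mathrm{num}(T)$.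
   Context: $\mathbb{N} = \{1,2,3,\ldots\}$, $\mathcal{P}(\mathbb{N})$ is its power set, and for $S \subseteq \mathbb{N}$, $f_n(S) = |S \cap \{1,\ldots,n\}|$. $|S|$ denotes cardinality. *)

theory Defs
  imports Main
begin

text \<open>The positive naturals \<open>\<nat> = {1,2,3,...}\<close> of the paper.\<close>
definition Npos :: "nat set" where
  "Npos = {n. 1 \<le> n}"

definition fcount :: "nat \<Rightarrow> nat set \<Rightarrow> nat" where
  "fcount n S = card (S \<inter> {1..n})"

end

theory Submission
  imports Defs "HOL-Library.Infinite_Set"
begin

text \<open>By additivity and the unit axiom, \<open>num\<close> counts finite sets. The Euclidean principle then
  makes \<open>num S\<close> exceed every natural number when \<open>S\<close> is infinite, since \<open>S\<close> has finite subsets of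
  every size; so \<open>num\<close> separates finite from infinite sets and hence equal numerosity forces equal
  cardinality. Conversely \<open>Npos\<close> and \<open>Npos - {1}\<close> are equinumerous via \<open>Suc\<close>, yet the second
  is a proper subset of the first and so has strictly smaller numerosity.\<close>

lemma infinite_Npos: "infinite Npos"
proof
  assume "finite Npos"
  then have "Suc (Max Npos) \<le> Max Npos"
    by (rule Max_ge) (simp add: Npos_def)
  then show False
    by simp
qed

lemma card_in_Npos: "finite F \<Longrightarrow> F \<noteq> {} \<Longrightarrow> card F \<in> Npos"
  by (simp add: Npos_def card_gt_0_iff Suc_le_eq)

lemma bij_betw_Suc_Npos: "bij_betw Suc Npos (Npos - {1})"
  unfolding bij_betw_def Npos_def
  by (auto simp: image_iff intro!: exI[of _ "x - 1" for x])
    (metis Suc_pred' not_less_eq_eq le_0_eq le_numeral_extra(4) Suc_le_eq)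

lemma bij_betw_infinite_nat_sets:
  fixes S T :: "nat set"
  assumes "infinite S" "infinite T"
  shows "\<exists>f. bij_betw f S T"
proof -
  have "bij_betw (enumerate T \<circ> inv_into UNIV (enumerate S)) S T"
    using bij_betw_trans[OF bij_betw_inv_into[OF bij_enumerate[OF assms(1)]]
        bij_enumerate[OF assms(2)]] .
  then show ?thesis by blast
qed

locale numerosity =
  fixes emb :: "nat \<Rightarrow> 'a"
    and plus :: "'a \<Rightarrow> 'a \<Rightarrow> 'a"
    and less :: "'a \<Rightarrow> 'a \<Rightarrow> bool"
    and num :: "nat set \<Rightarrow> 'a"
  assumes emb_inj: "inj_on emb Npos"
    and emb_plus: "\<And>m n. m \<in> Npos \<Longrightarrow> n \<in> Npos \<Longrightarrow> plus (emb m) (emb n) = emb (m + n)"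
    and less_irrefl: "\<And>x. \<not> less x x"
    and emb_less: "\<And>m n. m \<in> Npos \<Longrightarrow> n \<in> Npos \<Longrightarrow> less (emb m) (emb n) \<longleftrightarrow> m < n"
    and unit: "\<And>n. n \<in> Npos \<Longrightarrow> num {n} = emb 1"
    and additivity: "\<And>S T. S \<subseteq> Npos \<Longrightarrow> T \<subseteq> Npos \<Longrightarrow> S \<inter> T = {} \<Longrightarrow>
                        num (S \<union> T) = plus (num S) (num T)"
    and euclid: "\<And>S T. S \<subseteq> Npos \<Longrightarrow> T \<subseteq> Npos \<Longrightarrow> S \<subset> T \<Longrightarrow> less (num S) (num T)"
begin

lemma num_finite:
  assumes "F \<subseteq> Npos" "finite F" "F \<noteq> {}"
  shows "num F = emb (card F)"
  using assms(2,3,1)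
proof (induction F rule: finite_ne_induct)
  case (singleton x)
  then show ?case using unit by simp
next
  case (insert x F)
  have "num (insert x F) = plus (num {x}) (num F)"
    using insert additivity[of "{x}" F] by auto
  also have "\<dots> = plus (emb 1) (emb (card F))"
    using insert unit by auto
  also have "\<dots> = emb (1 + card F)"
    using insert card_in_Npos by (intro emb_plus) (auto simp: Npos_def)
  finally show ?case
    using insert by simp
qed

lemma num_infinite_not_in_emb:
  assumes S: "S \<subseteq> Npos" "infinite S"
  shows "num S \<notin> emb ` Npos"
proof
  assume "num S \<in> emb ` Npos"
  then obtain m where m: "m \<in> Npos" "num S = emb m"
    by auto
  obtain F where F: "F \<subseteq> S" "finite F" "card F = m + 1"
    using infinite_arbitrarily_large[OF S(2)] by blast
  have "less (num F) (num S)"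
    using F S by (intro euclid) auto
  moreover have "num F = emb (m + 1)"
    using num_finite[of F] F S by fastforce
  moreover have "m + 1 \<in> Npos"
    by (simp add: Npos_def)
  ultimately show False
    using emb_less m by auto
qed

lemma num_in_emb_iff_finite:
  assumes "S \<subseteq> Npos" "S \<noteq> {}"
  shows "num S \<in> emb ` Npos \<longleftrightarrow> finite S"
  using assms num_finite num_infinite_not_in_emb card_in_Npos by (metis image_eqI)

lemma num_eq_empty_iff:
  assumes "S \<subseteq> Npos" "T \<subseteq> Npos" "num S = num T" "S = {}"
  shows "T = {}"
  using assms euclid[of "{}" T] less_irrefl by auto

lemma num_eq_imp_bij_betw:
  assumes S: "S \<subseteq> Npos" and T: "T \<subseteq> Npos" and eq: "num S = num T"
  shows "\<exists>f. bij_betw f S T"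
proof (cases "S = {}")
  case True
  then show ?thesis
    using num_eq_empty_iff[OF S T eq] by auto
next
  case False
  then have "T \<noteq> {}"
    using num_eq_empty_iff[OF T S eq[symmetric]] by blast
  then have finite_iff: "finite S \<longleftrightarrow> finite T"
    using num_in_emb_iff_finite S T False eq by metis
  show ?thesis
  proof (cases "finite S")
    case True
    then have "emb (card S) = emb (card T)"
      using num_finite S T False \<open>T \<noteq> {}\<close> eq finite_iff by metis
    then have "card S = card T"
      using inj_onD[OF emb_inj] card_in_Npos True finite_iff False \<open>T \<noteq> {}\<close> by blast
    then show ?thesis
      using bij_betw_iff_card True finite_iff by blast
  next
    case False
    then show ?thesis
      using bij_betw_infinite_nat_sets finite_iff by blast
  qed
qed

end

theorem mainTheorem4:
  fixes emb :: "nat \<Rightarrow> 'a"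
    and plus :: "'a \<Rightarrow> 'a \<Rightarrow> 'a"
    and less :: "'a \<Rightarrow> 'a \<Rightarrow> bool"
    and num :: "nat set \<Rightarrow> 'a"
  assumes emb_inj: "inj_on emb Npos"
    and emb_plus: "\<And>m n. m \<in> Npos \<Longrightarrow> n \<in> Npos \<Longrightarrow> plus (emb m) (emb n) = emb (m + n)"
    and less_irrefl: "\<And>x. \<not> less x x"
    and less_trans: "\<And>x y z. less x y \<Longrightarrow> less y z \<Longrightarrow> less x z"
    and less_total: "\<And>x y. x \<noteq> y \<Longrightarrow> less x y \<or> less y x"
    and emb_less: "\<And>m n. m \<in> Npos \<Longrightarrow> n \<in> Npos \<Longrightarrow> less (emb m) (emb n) \<longleftrightarrow> m < n"
    and unit: "\<And>n. n \<in> Npos \<Longrightarrow> num {n} = emb 1"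
    and additivity: "\<And>S T. S \<subseteq> Npos \<Longrightarrow> T \<subseteq> Npos \<Longrightarrow> S \<inter> T = {} \<Longrightarrow>
                        num (S \<union> T) = plus (num S) (num T)"
    and finite_approx: "\<And>S T. S \<subseteq> Npos \<Longrightarrow> T \<subseteq> Npos \<Longrightarrow>
                        (\<forall>n\<in>Npos. fcount n S \<le> fcount n T) \<Longrightarrow>
                        (less (num S) (num T) \<or> num S = num T)"
    and euclid: "\<And>S T. S \<subseteq> Npos \<Longrightarrow> T \<subseteq> Npos \<Longrightarrow> S \<subset> T \<Longrightarrow> less (num S) (num T)"
  shows "(\<forall>F. F \<subseteq> Npos \<and> finite F \<and> F \<noteq> {} \<longrightarrow> num F = emb (card F))
       \<and> (\<forall>S. S \<subseteq> Npos \<and> S \<noteq> {} \<longrightarrow> (num S \<in> emb ` Npos \<longleftrightarrow> finite S))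
       \<and> (num Npos \<notin> emb ` Npos \<and> (\<forall>S. S \<subset> Npos \<longrightarrow> less (num S) (num Npos)))
       \<and> (\<forall>S T. S \<subseteq> Npos \<and> T \<subseteq> Npos \<and> num S = num T \<longrightarrow> (\<exists>f. bij_betw f S T))
       \<and> (\<exists>S T. S \<subseteq> Npos \<and> T \<subseteq> Npos \<and> (\<exists>f. bij_betw f S T) \<and> num S \<noteq> num T)"
proof -
  interpret numerosity emb plus less num
    by unfold_locales (fact emb_inj emb_plus less_irrefl emb_less unit additivity euclid)+
  have "num Npos \<noteq> num (Npos - {1})"
    using euclid[of "Npos - {1}" Npos] less_irrefl by (force simp: Npos_def)
  then have "\<exists>S T. S \<subseteq> Npos \<and> T \<subseteq> Npos \<and> (\<exists>f. bij_betw f S T) \<and> num S \<noteq> num T"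
    using bij_betw_Suc_Npos by blast
  moreover have "num Npos \<notin> emb ` Npos"
    using num_infinite_not_in_emb infinite_Npos by blast
  ultimately show ?thesis
    using num_finite num_in_emb_iff_finite num_eq_imp_bij_betw euclid by auto
qed

end
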